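(* Let $Y\subset\mathbb{R}^n$ be open and let $\omega\colon Y\to\mathbb{R}^n$, $F\colon Y\to\mathbb{R}$ and $D^\pm\colon Y\times Y\to\mathbb{R}^n$ be arbitrary functions with $D^\pm(u,u)=0$ for all $u\in Y$. Then the following are equivalent: (A) there exists $F^{\mathrm{num}}\colon Y\times Y\to\mathbb{R}$ with $F^{\mathrm{num}}(u,u)=F(u)$ such that for all $u_-,u_0,u_+\in Y$, $$\omega(u_0)\cdot\big(D^+(u_-,u_0)+D^-(u_0,u_+)\big)\ \ge\ F^{\mathrm{num}}(u_0,u_+)-F^{\mathrm{num}}(u_-,u_0);$$ (B) for all $u_-,u_+\in Y$, $$\omega(u_+)\cdot D^+(u_-,u_+)+\omega(u_-)\cdot D^-(u_-,u_+)\ \ge\ F(u_+)-F(u_-).$$ Moreover, there exists a consistent $F^{\mathrm{num}}$ for which (A) holds with equality for all triples if and only if (B) holds with equality for all pairs, and then $F^{\mathrm{num}}$ is uniquely given by $$F^{\mathrm{num}}(u_-,u_+)=\tfrac12\big(F(u_+)+F(u_-)\big)+\tfrac12\,\omega(u_-)\cdot D^-(u_-,u_+)-\tfrac12\,\omega(u_+)\cdot D^+(u_-,u_+).$$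
   Context: No relation between $\omega$, $F$ and $D^\pm$ (and no convexity) is assumed; the statement is purely algebraic. *)

theory Defs
  imports "HOL-Analysis.Analysis"
begin

end

theory Submission
  imports Defs
begin

text \<open>
  Write \<open>P u\<^sub>- u\<^sub>+ = \<omega>(u\<^sub>+) \<cdot> D\<^sup>+(u\<^sub>-,u\<^sub>+)\<close> and \<open>M u\<^sub>- u\<^sub>+ = \<omega>(u\<^sub>-) \<cdot> D\<^sup>-(u\<^sub>-,u\<^sub>+)\<close>; these vanish on
  the diagonal, and the left-hand side of (A) is \<open>P u\<^sub>- u\<^sub>0 + M u\<^sub>0 u\<^sub>+\<close>.
  Choosing \<open>u\<^sub>0 = u\<^sub>+\<close> resp. \<open>u\<^sub>0 = u\<^sub>-\<close> in (A) yields the one-sided bounds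
  \<open>F(u\<^sub>+) - P \<le> F\<^sup>n\<^sup>u\<^sup>m(u\<^sub>-,u\<^sub>+) \<le> F(u\<^sub>-) + M\<close>, which add up to (B), and are equalities in the
  conservative case, whence the formula for \<open>F\<^sup>n\<^sup>u\<^sup>m\<close> by averaging.
  Conversely, for the central flux given by that formula the defect of (A) at a triple is
  half the sum of the defects of (B) at its two consecutive pairs.
  Only the values on \<open>Y\<close> matter.
\<close>

definition central_num_flux ::
    "('a \<Rightarrow> 'b::field) \<Rightarrow> ('a \<Rightarrow> 'a \<Rightarrow> 'b) \<Rightarrow> ('a \<Rightarrow> 'a \<Rightarrow> 'b) \<Rightarrow> 'a \<Rightarrow> 'a \<Rightarrow> 'b" where
  "central_num_flux F P M a b = (F b + F a) / 2 + M a b / 2 - P a b / 2"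

lemma central_num_flux_diag:
  assumes "P u u = 0" and "M u u = 0"
  shows "central_num_flux F P M u u = (F u :: 'b::field_char_0)"
  using assms by (simp add: central_num_flux_def field_simps)

lemma central_num_flux_triple_defect:
  fixes F :: "'a \<Rightarrow> 'b::field_char_0"
  shows "P a b + M b c - (central_num_flux F P M b c - central_num_flux F P M a b)
    = ((P b c + M b c - (F c - F b)) + (P a b + M a b - (F b - F a))) / 2"
  by (simp add: central_num_flux_def field_simps)

lemma num_flux_one_sided_bounds:
  fixes Fn :: "'a \<Rightarrow> 'a \<Rightarrow> 'b::linordered_field"
  assumes consistent: "\<forall>u\<in>Y. Fn u u = F u"
    and local_ineq: "\<forall>a\<in>Y. \<forall>b\<in>Y. \<forall>c\<in>Y. Fn b c - Fn a b \<le> P a b + M b c"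
    and diag: "\<forall>u\<in>Y. P u u = 0" "\<forall>u\<in>Y. M u u = 0"
    and "a \<in> Y" and "b \<in> Y"
  shows "F b - Fn a b \<le> P a b" and "Fn a b - F a \<le> M a b"
proof -
  have "Fn b b - Fn a b \<le> P a b + M b b" and "Fn a b - Fn a a \<le> P a a + M a b"
    using local_ineq \<open>a \<in> Y\<close> \<open>b \<in> Y\<close> by blast+
  then show "F b - Fn a b \<le> P a b" and "Fn a b - F a \<le> M a b"
    using consistent diag \<open>a \<in> Y\<close> \<open>b \<in> Y\<close> by simp_all
qed

lemma num_flux_conservative_values:
  fixes Fn :: "'a \<Rightarrow> 'a \<Rightarrow> 'b::field"
  assumes consistent: "\<forall>u\<in>Y. Fn u u = F u"
    and local_eq: "\<forall>a\<in>Y. \<forall>b\<in>Y. \<forall>c\<in>Y. P a b + M b c = Fn b c - Fn a b"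
    and diag: "\<forall>u\<in>Y. P u u = 0" "\<forall>u\<in>Y. M u u = 0"
    and "a \<in> Y" and "b \<in> Y"
  shows "P a b = F b - Fn a b" and "M a b = Fn a b - F a"
proof -
  have "P a b + M b b = Fn b b - Fn a b" and "P a a + M a b = Fn a b - Fn a a"
    using local_eq \<open>a \<in> Y\<close> \<open>b \<in> Y\<close> by blast+
  then show "P a b = F b - Fn a b" and "M a b = Fn a b - F a"
    using consistent diag \<open>a \<in> Y\<close> \<open>b \<in> Y\<close> by simp_all
qed

theorem entropy_stable_num_flux_iff:
  fixes F :: "'a \<Rightarrow> 'b::linordered_field"
  assumes "\<forall>u\<in>Y. P u u = 0" and "\<forall>u\<in>Y. M u u = 0"
  shows "(\<exists>Fn. (\<forall>u\<in>Y. Fn u u = F u) \<and>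
            (\<forall>a\<in>Y. \<forall>b\<in>Y. \<forall>c\<in>Y. Fn b c - Fn a b \<le> P a b + M b c))
    \<longleftrightarrow> (\<forall>a\<in>Y. \<forall>b\<in>Y. F b - F a \<le> P a b + M a b)"
proof
  assume "\<exists>Fn. (\<forall>u\<in>Y. Fn u u = F u) \<and>
            (\<forall>a\<in>Y. \<forall>b\<in>Y. \<forall>c\<in>Y. Fn b c - Fn a b \<le> P a b + M b c)"
  then obtain Fn where consistent: "\<forall>u\<in>Y. Fn u u = F u"
    and local_ineq: "\<forall>a\<in>Y. \<forall>b\<in>Y. \<forall>c\<in>Y. Fn b c - Fn a b \<le> P a b + M b c"
    by blast
  show "\<forall>a\<in>Y. \<forall>b\<in>Y. F b - F a \<le> P a b + M a b"
  proof (intro ballI)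
    fix a b assume "a \<in> Y" "b \<in> Y"
    from num_flux_one_sided_bounds[OF consistent local_ineq assms this]
    show "F b - F a \<le> P a b + M a b" by linarith
  qed
next
  assume pair_ineq: "\<forall>a\<in>Y. \<forall>b\<in>Y. F b - F a \<le> P a b + M a b"
  let ?G = "central_num_flux F P M"
  show "\<exists>Fn. (\<forall>u\<in>Y. Fn u u = F u) \<and>
            (\<forall>a\<in>Y. \<forall>b\<in>Y. \<forall>c\<in>Y. Fn b c - Fn a b \<le> P a b + M b c)"
  proof (intro exI[of _ ?G] conjI ballI)
    fix u assume "u \<in> Y"
    then show "?G u u = F u"
      using assms by (simp add: central_num_flux_diag)
  next
    fix a b c assume "a \<in> Y" "b \<in> Y" "c \<in> Y"
    then have "0 \<le> P b c + M b c - (F c - F b)" and "0 \<le> P a b + M a b - (F b - F a)"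
      using pair_ineq by simp_all
    then have "0 \<le> ((P b c + M b c - (F c - F b)) + (P a b + M a b - (F b - F a))) / 2"
      by simp
    also have "\<dots> = P a b + M b c - (?G b c - ?G a b)"
      by (rule central_num_flux_triple_defect[symmetric])
    finally show "?G b c - ?G a b \<le> P a b + M b c"
      by simp
  qed
qed

theorem entropy_conservative_num_flux_iff:
  fixes F :: "'a \<Rightarrow> 'b::field_char_0"
  assumes "\<forall>u\<in>Y. P u u = 0" and "\<forall>u\<in>Y. M u u = 0"
  shows "(\<exists>Fn. (\<forall>u\<in>Y. Fn u u = F u) \<and>
            (\<forall>a\<in>Y. \<forall>b\<in>Y. \<forall>c\<in>Y. P a b + M b c = Fn b c - Fn a b))
    \<longleftrightarrow> (\<forall>a\<in>Y. \<forall>b\<in>Y. P a b + M a b = F b - F a)"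
proof
  assume "\<exists>Fn. (\<forall>u\<in>Y. Fn u u = F u) \<and>
            (\<forall>a\<in>Y. \<forall>b\<in>Y. \<forall>c\<in>Y. P a b + M b c = Fn b c - Fn a b)"
  then obtain Fn where consistent: "\<forall>u\<in>Y. Fn u u = F u"
    and local_eq: "\<forall>a\<in>Y. \<forall>b\<in>Y. \<forall>c\<in>Y. P a b + M b c = Fn b c - Fn a b"
    by blast
  show "\<forall>a\<in>Y. \<forall>b\<in>Y. P a b + M a b = F b - F a"
  proof (intro ballI)
    fix a b assume ab: "a \<in> Y" "b \<in> Y"
    show "P a b + M a b = F b - F a"
      unfolding num_flux_conservative_values[OF consistent local_eq assms ab] by simp
  qed
next
  assume pair_eq: "\<forall>a\<in>Y. \<forall>b\<in>Y. P a b + M a b = F b - F a"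
  let ?G = "central_num_flux F P M"
  show "\<exists>Fn. (\<forall>u\<in>Y. Fn u u = F u) \<and>
            (\<forall>a\<in>Y. \<forall>b\<in>Y. \<forall>c\<in>Y. P a b + M b c = Fn b c - Fn a b)"
  proof (intro exI[of _ ?G] conjI ballI)
    fix u assume "u \<in> Y"
    then show "?G u u = F u"
      using assms by (simp add: central_num_flux_diag)
  next
    fix a b c assume "a \<in> Y" "b \<in> Y" "c \<in> Y"
    have "P a b + M b c - (?G b c - ?G a b)
        = ((P b c + M b c - (F c - F b)) + (P a b + M a b - (F b - F a))) / 2"
      by (rule central_num_flux_triple_defect)
    also have "\<dots> = 0"
      using pair_eq \<open>a \<in> Y\<close> \<open>b \<in> Y\<close> \<open>c \<in> Y\<close> by simp
    finally show "P a b + M b c = ?G b c - ?G a b"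
      by simp
  qed
qed

theorem entropy_conservative_num_flux_eq_central:
  fixes Fn :: "'a \<Rightarrow> 'a \<Rightarrow> 'b::field_char_0"
  assumes consistent: "\<forall>u\<in>Y. Fn u u = F u"
    and local_eq: "\<forall>a\<in>Y. \<forall>b\<in>Y. \<forall>c\<in>Y. P a b + M b c = Fn b c - Fn a b"
    and diag: "\<forall>u\<in>Y. P u u = 0" "\<forall>u\<in>Y. M u u = 0"
    and "a \<in> Y" and "b \<in> Y"
  shows "Fn a b = central_num_flux F P M a b"
  unfolding central_num_flux_def num_flux_conservative_values[OF assms]
  by (simp add: field_simps)

theorem mainTheorem3:
  fixes Y :: "(real ^ 'n) set"
    and \<omega> :: "real ^ 'n \<Rightarrow> real ^ 'n"
    and F :: "real ^ 'n \<Rightarrow> real"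
    and Dp Dm :: "real ^ 'n \<Rightarrow> real ^ 'n \<Rightarrow> real ^ 'n"
  assumes "open Y"
    and "\<forall>u\<in>Y. Dp u u = 0"
    and "\<forall>u\<in>Y. Dm u u = 0"
  shows "((\<exists>Fn :: real ^ 'n \<Rightarrow> real ^ 'n \<Rightarrow> real.
              (\<forall>u\<in>Y. Fn u u = F u) \<and>
              (\<forall>um\<in>Y. \<forall>u0\<in>Y. \<forall>up\<in>Y.
                 \<omega> u0 \<bullet> (Dp um u0 + Dm u0 up) \<ge> Fn u0 up - Fn um u0))
          \<longleftrightarrow>
          (\<forall>um\<in>Y. \<forall>up\<in>Y.
              \<omega> up \<bullet> Dp um up + \<omega> um \<bullet> Dm um up \<ge> F up - F um))
      \<and> ((\<exists>Fn :: real ^ 'n \<Rightarrow> real ^ 'n \<Rightarrow> real.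
              (\<forall>u\<in>Y. Fn u u = F u) \<and>
              (\<forall>um\<in>Y. \<forall>u0\<in>Y. \<forall>up\<in>Y.
                 \<omega> u0 \<bullet> (Dp um u0 + Dm u0 up) = Fn u0 up - Fn um u0))
          \<longleftrightarrow>
          (\<forall>um\<in>Y. \<forall>up\<in>Y.
              \<omega> up \<bullet> Dp um up + \<omega> um \<bullet> Dm um up = F up - F um))
      \<and> (\<forall>Fn :: real ^ 'n \<Rightarrow> real ^ 'n \<Rightarrow> real.
              ((\<forall>u\<in>Y. Fn u u = F u) \<and>
               (\<forall>um\<in>Y. \<forall>u0\<in>Y. \<forall>up\<in>Y.
                  \<omega> u0 \<bullet> (Dp um u0 + Dm u0 up) = Fn u0 up - Fn um u0))
              \<longrightarrow>
              (\<forall>um\<in>Y. \<forall>up\<in>Y.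
                 Fn um up = (F up + F um) / 2 + (\<omega> um \<bullet> Dm um up) / 2
                            - (\<omega> up \<bullet> Dp um up) / 2))"
proof -
  let ?P = "\<lambda>a b. \<omega> b \<bullet> Dp a b" and ?M = "\<lambda>a b. \<omega> a \<bullet> Dm a b"
  have diag: "\<forall>u\<in>Y. ?P u u = 0" "\<forall>u\<in>Y. ?M u u = 0"
    using assms(2,3) by simp_all
  note stable = entropy_stable_num_flux_iff[where P = ?P and M = ?M and F = F, OF diag]
    and conservative = entropy_conservative_num_flux_iff[where P = ?P and M = ?M and F = F, OF diag]
    and unique = entropy_conservative_num_flux_eq_central[where P = ?P and M = ?M and F = F]
  show ?thesis
    unfolding inner_add_right
  proof (intro conjI allI impI ballI)
    fix Fn a b
    assume "(\<forall>u\<in>Y. Fn u u = F u) \<and>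
            (\<forall>a\<in>Y. \<forall>b\<in>Y. \<forall>c\<in>Y. ?P a b + ?M b c = Fn b c - Fn a b)"
      and "a \<in> Y" "b \<in> Y"
    with unique[of Y Fn a b] diag
    show "Fn a b = (F b + F a) / 2 + ?M a b / 2 - ?P a b / 2"
      unfolding central_num_flux_def by blast
  qed (fact stable conservative)+
qed

end
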